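(* Let $H$ be a dense 3-graph and $T$ a triangle. Then $H$ is forbidden for $T$ if and only if $H$ is exactly forbidden for $T$.
   Context: A 3-graph is a 3-uniform hypergraph. For a 3-graph $G$ and a 3-graph $F$, $G$ is $F$-free if it has no (not necessarily induced) subhypergraph isomorphic to $F$. Let $T$ be a triangle with side lengths $a,b,c$, $\varepsilon>0$, $\varepsilon'=\varepsilon\min\{a,b,c\}$; a triangle $A'B'C'$ is $\varepsilon$-congruent to $T$ if there are $A,B,C\in\mathbb{R}^2$ with $ABC$ congruent to $T$ and $A',B',C'$ within distance $\varepsilon'$ of $A,B,C$ respectively. For finite $P\subseteq\mathbb{R}^2$, $\mathcal{H}(T,P,\varepsilon)$ is the 3-graph with vertex set $P$ whose edges are the triples forming triangles $\varepsilon$-congruent to $T$. A 3-graph $H$ is forbidden for $T$ if there exists $\varepsilon>0$ such that for every point set $P\subseteq\mathbb{R}^2$ with $|P|=|V(H)|$, $\mathcal{H}(T,P,\varepsilon)$ is $H$-free. A 3-graph $H$ with vertex set $[k]$ is exactly forbidden for $T$ if there do not exist points $p_1,\dots,p_k\in\mathbb{R}^2$ (not necessarily distinct) such that for every edge $xyz\in E(H)$ the triangle $p_xp_yp_z$ is congruent to $T$. A 3-graph $H$ on $k$ vertices is dense if there is an ordering $v_1,\dots,v_k$ of its vertices such that for every $3\le i\le k$ there is an edge of $H[\{v_1,\dots,v_i\}]$ containing $v_i$. *)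

theory Defs
  imports "HOL-Analysis.Analysis" "HOL-Library.Multiset"
begin

type_synonym point = "real^2"

text \<open>A triangle T is given by its side lengths (a, b, c); it is a genuine
(non-degenerate) triangle iff all sides are positive and the strict triangle
inequalities hold.\<close>
definition is_triangle :: "real \<times> real \<times> real \<Rightarrow> bool" where
  "is_triangle T = (case T of (a, b, c) \<Rightarrow>
     0 < a \<and> 0 < b \<and> 0 < c \<and> a < b + c \<and> b < a + c \<and> c < a + b)"

definition congruent_tri :: "real \<times> real \<times> real \<Rightarrow> point \<Rightarrow> point \<Rightarrow> point \<Rightarrow> bool" where
  "congruent_tri T A B C = (case T of (a, b, c) \<Rightarrow>
     mset [dist A B, dist B C, dist C A] = mset [a, b, c])"

definition eps_congruent ::
  "real \<times> real \<times> real \<Rightarrow> real \<Rightarrow> point \<Rightarrow> point \<Rightarrow> point \<Rightarrow> bool" where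
  "eps_congruent T \<epsilon> A' B' C' = (case T of (a, b, c) \<Rightarrow>
     (\<exists>A B C. congruent_tri T A B C \<and>
        dist A' A \<le> \<epsilon> * min a (min b c) \<and>
        dist B' B \<le> \<epsilon> * min a (min b c) \<and>
        dist C' C \<le> \<epsilon> * min a (min b c)))"

definition three_graph :: "'v set \<Rightarrow> 'v set set \<Rightarrow> bool" where
  "three_graph V E = (finite V \<and> (\<forall>e\<in>E. e \<subseteq> V \<and> card e = 3))"

definition tri_edges :: "real \<times> real \<times> real \<Rightarrow> point set \<Rightarrow> real \<Rightarrow> point set set" where
  "tri_edges T P \<epsilon> = {{x, y, z} | x y z. x \<in> P \<and> y \<in> P \<and> z \<in> P \<and>
      x \<noteq> y \<and> y \<noteq> z \<and> x \<noteq> z \<and> eps_congruent T \<epsilon> x y z}"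

definition contains_copy :: "'w set \<Rightarrow> 'w set set \<Rightarrow> 'v set \<Rightarrow> 'v set set \<Rightarrow> bool" where
  "contains_copy W F V E = (\<exists>f. inj_on f V \<and> f ` V \<subseteq> W \<and> (\<forall>e\<in>E. f ` e \<in> F))"

definition forbidden :: "'v set \<Rightarrow> 'v set set \<Rightarrow> real \<times> real \<times> real \<Rightarrow> bool" where
  "forbidden V E T = (\<exists>\<epsilon>>0. \<forall>P :: point set. finite P \<and> card P = card V \<longrightarrow>
      \<not> contains_copy P (tri_edges T P \<epsilon>) V E)"

definition exactly_forbidden :: "'v set \<Rightarrow> 'v set set \<Rightarrow> real \<times> real \<times> real \<Rightarrow> bool" where
  "exactly_forbidden V E T = (\<not> (\<exists>p :: 'v \<Rightarrow> point. \<forall>e\<in>E.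
      \<exists>x y z. e = {x, y, z} \<and> congruent_tri T (p x) (p y) (p z)))"

definition dense3 :: "'v set \<Rightarrow> 'v set set \<Rightarrow> bool" where
  "dense3 V E = (\<exists>vs. distinct vs \<and> set vs = V \<and>
      (\<forall>i. 2 \<le> i \<and> i < length vs \<longrightarrow>
         (\<exists>e\<in>E. e \<subseteq> set (take (Suc i) vs) \<and> vs ! i \<in> e)))"

end

theory Submission
  imports Defs
begin

text \<open>An exact realisation of \<open>H\<close> may send several vertices to the same point, but
perturbing it by at most \<open>\<epsilon> min(a, b, c)\<close> makes it injective while keeping every edge
\<open>\<epsilon>\<close>-congruent to \<open>T\<close>; hence a forbidden \<open>H\<close> is exactly forbidden. Conversely, if
\<open>H\<close> is not forbidden it has \<open>\<epsilon>\<close>-realisations for all \<open>\<epsilon> > 0\<close>. In such a realisation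
every edge has diameter at most the perimeter of \<open>T\<close>, and density lets every vertex be
reached from the first one along edges, so after a translation the realisations with
\<open>\<epsilon> = 1/(n+1)\<close> lie in a fixed ball. A convergent subsequence has a limit in which every
edge is exactly congruent to \<open>T\<close>, as congruence to \<open>T\<close> is a closed condition.\<close>

lemma congruent_tri_swap: "congruent_tri T A B C \<Longrightarrow> congruent_tri T B A C"
  unfolding congruent_tri_def by (cases T) (auto simp: dist_commute add_mset_commute)

lemma congruent_tri_rotate: "congruent_tri T A B C \<Longrightarrow> congruent_tri T B C A"
  unfolding congruent_tri_def by (cases T) (auto simp: dist_commute add_mset_commute)

lemma eps_congruent_swap: "eps_congruent T \<epsilon> A B C \<Longrightarrow> eps_congruent T \<epsilon> B A C"
  unfolding eps_congruent_def by (cases T) (auto intro: congruent_tri_swap)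

lemma eps_congruent_rotate: "eps_congruent T \<epsilon> A B C \<Longrightarrow> eps_congruent T \<epsilon> B C A"
  unfolding eps_congruent_def by (cases T) (auto intro: congruent_tri_rotate)

lemma permutation_invariant3:
  assumes "{x, y, z} = {X, Y, Z}" and "P x y z" and "distinct [X, Y, Z]"
    and swap: "\<And>x y z. P x y z \<Longrightarrow> P y x z" and rotate: "\<And>x y z. P x y z \<Longrightarrow> P y z x"
  shows "P X Y Z"
proof -
  have "P y z x" "P z x y" "P y x z" "P x z y" "P z y x"
    using swap rotate \<open>P x y z\<close> by blast+
  moreover have "X \<in> {x, y, z}" "Y \<in> {x, y, z}" "Z \<in> {x, y, z}"
    using assms(1) by auto
  ultimately show ?thesis
    using \<open>P x y z\<close> assms(3) by auto
qed

lemma congruent_tri_translate: "congruent_tri T (A - t) (B - t) (C - t) \<longleftrightarrow> congruent_tri T A B C"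
  by (simp add: congruent_tri_def dist_norm)

lemma eps_congruent_translate:
  assumes "eps_congruent T \<epsilon> X Y Z"
  shows "eps_congruent T \<epsilon> (X - t) (Y - t) (Z - t)"
proof -
  obtain a b c where T: "T = (a, b, c)" by (cases T)
  from assms obtain A B C where "congruent_tri T A B C"
    "dist X A \<le> \<epsilon> * min a (min b c)" "dist Y B \<le> \<epsilon> * min a (min b c)"
    "dist Z C \<le> \<epsilon> * min a (min b c)"
    unfolding T eps_congruent_def by auto
  then show ?thesis
    unfolding T eps_congruent_def prod.case
    by (intro exI[of _ "A - t"] exI[of _ "B - t"] exI[of _ "C - t"])
       (simp add: T congruent_tri_translate dist_norm)
qed

lemma eps_congruent_dist_le:
  assumes "eps_congruent (a, b, c) \<epsilon> X Y Z" and "0 \<le> a" "0 \<le> b" "0 \<le> c" and "\<epsilon> \<le> 1"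
  shows "dist X Y \<le> a + b + c"
proof -
  define m where "m = min a (min b c)"
  obtain A B C where cong: "congruent_tri (a, b, c) A B C"
    and near: "dist X A \<le> \<epsilon> * m" "dist Y B \<le> \<epsilon> * m"
    using assms(1) unfolding eps_congruent_def m_def by auto
  have "{dist A B, dist B C, dist C A} = {a, b, c}"
    using mset_eq_setD cong unfolding congruent_tri_def by fastforce
  then have side: "dist A B \<in> {a, b, c}"
    by blast
  have "0 \<le> m"
    using assms(2-4) by (simp add: m_def)
  then have "\<epsilon> * m \<le> m"
    using mult_right_mono[OF assms(5)] by simp
  moreover have "dist X Y \<le> dist X A + dist A B + dist Y B"
    using dist_triangle[of X Y A] dist_triangle[of A Y B] by (simp add: dist_commute)
  moreover have "2 * m + dist A B \<le> a + b + c"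
    using side assms(2-4) by (auto simp: m_def min_def)
  ultimately show ?thesis
    using near by linarith
qed

lemma closed_congruent_tri: "closed {(A, B, C). congruent_tri T A B C}"
proof -
  obtain a b c where T: "T = (a, b, c)" by (cases T)
  define K where "K = {(u, v, w). mset [u, v, w] = mset [a, b, c]}"
  have "K \<subseteq> {a, b, c} \<times> {a, b, c} \<times> {a, b, c}"
  proof
    fix t assume "t \<in> K"
    then obtain u v w where t: "t = (u, v, w)" and "mset [u, v, w] = mset [a, b, c]"
      unfolding K_def by auto
    then have "{u, v, w} = {a, b, c}"
      using mset_eq_setD by fastforce
    then show "t \<in> {a, b, c} \<times> {a, b, c} \<times> {a, b, c}"
      using t by blast
  qed
  then have "closed K"
    by (intro finite_imp_closed) (auto intro: finite_subset)
  moreover have "{(A, B, C). congruent_tri T A B C} = (\<lambda>(A, B, C). (dist A B, dist B C, dist C A)) -` K"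
    by (auto simp: T K_def congruent_tri_def)
  moreover have "isCont (\<lambda>(A, B, C). (dist A B, dist B C, dist C A)) x" for x :: "point \<times> point \<times> point"
    unfolding case_prod_beta by (intro continuous_intros)
  ultimately show ?thesis
    by (simp add: continuous_closed_vimage)
qed

lemma congruent_tri_limit:
  assumes "\<And>n. eps_congruent T (\<epsilon> n) (X n) (Y n) (Z n)" and "\<epsilon> \<longlonglongrightarrow> 0"
    and "X \<longlonglongrightarrow> A" "Y \<longlonglongrightarrow> B" "Z \<longlonglongrightarrow> C"
  shows "congruent_tri T A B C"
proof -
  obtain a b c where T: "T = (a, b, c)" by (cases T)
  define m where "m = min a (min b c)"
  obtain A' B' C' where cong: "\<And>n. congruent_tri T (A' n) (B' n) (C' n)"
    and near: "\<And>n. dist (X n) (A' n) \<le> \<epsilon> n * m" "\<And>n. dist (Y n) (B' n) \<le> \<epsilon> n * m"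
      "\<And>n. dist (Z n) (C' n) \<le> \<epsilon> n * m"
    using assms(1) unfolding T eps_congruent_def prod.case m_def by metis
  have nearby_tendsto: "F \<longlonglongrightarrow> L" if "G \<longlonglongrightarrow> L" and "\<And>n. dist (G n) (F n) \<le> \<epsilon> n * m"
    for F G :: "nat \<Rightarrow> point" and L
  proof -
    have "(\<lambda>n. G n - F n) \<longlonglongrightarrow> 0"
    proof (rule Lim_null_comparison)
      show "\<forall>\<^sub>F n in sequentially. norm (G n - F n) \<le> \<epsilon> n * m"
        using that(2) by (simp add: dist_norm)
      show "(\<lambda>n. \<epsilon> n * m) \<longlonglongrightarrow> 0"
        using tendsto_mult_left_zero[OF assms(2)] .
    qed
    then show ?thesis
      using Lim_transform2[OF that(1)] by blast
  qed
  have "(\<lambda>n. (A' n, B' n, C' n)) \<longlonglongrightarrow> (A, B, C)"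
    using nearby_tendsto[OF assms(3) near(1)] nearby_tendsto[OF assms(4) near(2)] nearby_tendsto[OF assms(5) near(3)]
    by (intro tendsto_Pair)
  then show ?thesis
    using closed_sequentially[OF closed_congruent_tri] cong by fastforce
qed

text \<open>Every ordering of an edge is constrained; by permutation invariance this is equivalent
to the single ordering used in \<^const>\<open>exactly_forbidden\<close> and \<^const>\<open>tri_edges\<close>.\<close>

definition realizes :: "real \<times> real \<times> real \<Rightarrow> 'v set set \<Rightarrow> ('v \<Rightarrow> point) \<Rightarrow> bool" where
  "realizes T E p \<longleftrightarrow> (\<forall>x y z. {x, y, z} \<in> E \<longrightarrow> congruent_tri T (p x) (p y) (p z))"

definition eps_realizes :: "real \<times> real \<times> real \<Rightarrow> real \<Rightarrow> 'v set set \<Rightarrow> ('v \<Rightarrow> point) \<Rightarrow> bool" where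
  "eps_realizes T \<epsilon> E p \<longleftrightarrow> (\<forall>x y z. {x, y, z} \<in> E \<longrightarrow> eps_congruent T \<epsilon> (p x) (p y) (p z))"

lemma three_graph_edgeD:
  assumes "three_graph V E" and "{x, y, z} \<in> E"
  shows "distinct [x, y, z]" and "x \<in> V" "y \<in> V" "z \<in> V"
  using assms by (auto simp: three_graph_def card_insert_if split: if_splits)

lemma three_graph_edgeE:
  assumes "three_graph V E" and "e \<in> E"
  obtains x y z where "e = {x, y, z}"
  using assms by (auto simp: three_graph_def card_3_iff)

lemma exactly_forbidden_iff:
  assumes "three_graph V E"
  shows "exactly_forbidden V E T \<longleftrightarrow> \<not> (\<exists>p. realizes T E p)"
proof -
  have "(\<forall>e\<in>E. \<exists>x y z. e = {x, y, z} \<and> congruent_tri T (p x) (p y) (p z)) \<longleftrightarrow> realizes T E p"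
    for p :: "'a \<Rightarrow> point"
  proof
    assume some_order: "\<forall>e\<in>E. \<exists>x y z. e = {x, y, z} \<and> congruent_tri T (p x) (p y) (p z)"
    show "realizes T E p"
      unfolding realizes_def
    proof (intro allI impI)
      fix X Y Z assume e: "{X, Y, Z} \<in> E"
      then obtain x y z where "{x, y, z} = {X, Y, Z}" "congruent_tri T (p x) (p y) (p z)"
        using some_order by metis
      then show "congruent_tri T (p X) (p Y) (p Z)"
        using three_graph_edgeD(1)[OF assms e]
        by (rule permutation_invariant3[where P = "\<lambda>x y z. congruent_tri T (p x) (p y) (p z)"])
           (auto intro: congruent_tri_swap congruent_tri_rotate)
    qed
  next
    assume "realizes T E p"
    then show "\<forall>e\<in>E. \<exists>x y z. e = {x, y, z} \<and> congruent_tri T (p x) (p y) (p z)"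
      unfolding realizes_def by (metis three_graph_edgeE[OF assms])
  qed
  then show ?thesis
    unfolding exactly_forbidden_def by simp
qed

lemma inj_on_distinct3:
  assumes "inj_on q V" and "distinct [x, y, z]" and "x \<in> V" "y \<in> V" "z \<in> V"
  shows "distinct [q x, q y, q z]"
  using assms by (auto dest: inj_onD)

lemma contains_copy_tri_edges_iff:
  assumes "three_graph V E"
  shows "contains_copy P (tri_edges T P \<epsilon>) V E \<longleftrightarrow>
    (\<exists>q. inj_on q V \<and> q ` V \<subseteq> P \<and> eps_realizes T \<epsilon> E q)"
proof -
  have "(\<forall>e\<in>E. q ` e \<in> tri_edges T P \<epsilon>) \<longleftrightarrow> eps_realizes T \<epsilon> E q"
    if inj: "inj_on q V" and into: "q ` V \<subseteq> P" for q
  proof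
    assume copy: "\<forall>e\<in>E. q ` e \<in> tri_edges T P \<epsilon>"
    show "eps_realizes T \<epsilon> E q"
      unfolding eps_realizes_def
    proof (intro allI impI)
      fix x y z assume e: "{x, y, z} \<in> E"
      then obtain x' y' z' where "{x', y', z'} = {q x, q y, q z}" "eps_congruent T \<epsilon> x' y' z'"
        using copy unfolding tri_edges_def by force
      then show "eps_congruent T \<epsilon> (q x) (q y) (q z)"
        using inj_on_distinct3[OF inj three_graph_edgeD[OF assms e]]
        by (rule permutation_invariant3[where P = "eps_congruent T \<epsilon>"])
           (auto intro: eps_congruent_swap eps_congruent_rotate)
    qed
  next
    assume realized: "eps_realizes T \<epsilon> E q"
    show "\<forall>e\<in>E. q ` e \<in> tri_edges T P \<epsilon>"
    proof
      fix e assume "e \<in> E"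
      then obtain x y z where xyz: "e = {x, y, z}" and e: "{x, y, z} \<in> E"
        using three_graph_edgeE[OF assms] by metis
      have "distinct [q x, q y, q z]"
        using inj_on_distinct3[OF inj three_graph_edgeD[OF assms e]] .
      moreover have "q x \<in> P" "q y \<in> P" "q z \<in> P"
        using into three_graph_edgeD(2-4)[OF assms e] by auto
      moreover have "eps_congruent T \<epsilon> (q x) (q y) (q z)"
        using realized e unfolding eps_realizes_def by blast
      ultimately show "q ` e \<in> tri_edges T P \<epsilon>"
        unfolding xyz tri_edges_def by auto
    qed
  qed
  then show ?thesis
    unfolding contains_copy_def by blast
qed

lemma forbidden_iff:
  assumes "three_graph V E"
  shows "forbidden V E T \<longleftrightarrow> (\<exists>\<epsilon>>0. \<forall>q. inj_on q V \<longrightarrow> \<not> eps_realizes T \<epsilon> E q)"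
proof -
  have "finite V"
    using assms by (simp add: three_graph_def)
  have "(\<forall>P. finite P \<and> card P = card V \<longrightarrow> \<not> contains_copy P (tri_edges T P \<epsilon>) V E) \<longleftrightarrow>
    (\<forall>q. inj_on q V \<longrightarrow> \<not> eps_realizes T \<epsilon> E q)" for \<epsilon>
    using \<open>finite V\<close> card_image contains_copy_tri_edges_iff[OF assms]
    by (metis finite_imageI subset_refl)
  then show ?thesis
    unfolding forbidden_def by simp
qed

lemma exists_inj_on_near:
  fixes p :: "'v \<Rightarrow> 'a::euclidean_space"
  assumes "finite V" and "\<delta> > 0"
  shows "\<exists>q. inj_on q V \<and> (\<forall>v\<in>V. dist (q v) (p v) \<le> \<delta>)"
  using assms(1)
proof (induction V rule: finite_induct)
  case empty
  then show ?case by auto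
next
  case (insert w F)
  then obtain q where q: "inj_on q F" "\<forall>v\<in>F. dist (q v) (p v) \<le> \<delta>"
    by blast
  obtain y where y: "y \<in> ball (p w) \<delta>" "y \<notin> q ` F"
    using ball_minus_countable_nonempty[OF countable_finite[OF finite_imageI[OF insert(1)]] assms(2)]
    by blast
  have "inj_on (q(w := y)) (insert w F)"
    using q(1) y(2) insert(2) unfolding inj_on_def by (auto simp: image_iff)
  moreover have "\<forall>v\<in>insert w F. dist ((q(w := y)) v) (p v) \<le> \<delta>"
    using q(2) y(1) insert(2) by (auto simp: dist_commute)
  ultimately show ?case
    by blast
qed

lemma exists_inj_eps_realizes:
  assumes "three_graph V E" and "realizes (a, b, c) E p" and "0 < a" "0 < b" "0 < c" and "\<epsilon> > 0"
  shows "\<exists>q. inj_on q V \<and> eps_realizes (a, b, c) \<epsilon> E q"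
proof -
  obtain q where "inj_on q V" and near: "\<forall>v\<in>V. dist (q v) (p v) \<le> \<epsilon> * min a (min b c)"
    using exists_inj_on_near[of V "\<epsilon> * min a (min b c)" p] assms by (auto simp: three_graph_def)
  moreover have "eps_realizes (a, b, c) \<epsilon> E q"
    unfolding eps_realizes_def
  proof (intro allI impI)
    fix x y z assume e: "{x, y, z} \<in> E"
    then show "eps_congruent (a, b, c) \<epsilon> (q x) (q y) (q z)"
      using assms(2) near three_graph_edgeD(2-4)[OF assms(1) e]
      unfolding realizes_def eps_congruent_def prod.case by blast
  qed
  ultimately show ?thesis
    by blast
qed

lemma eps_realizes_dist_le:
  assumes "three_graph V E" and "eps_realizes (a, b, c) \<epsilon> E p"
    and "0 \<le> a" "0 \<le> b" "0 \<le> c" and "\<epsilon> \<le> 1"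
    and "e \<in> E" "u \<in> e" "w \<in> e"
  shows "dist (p u) (p w) \<le> a + b + c"
proof -
  obtain x y z where xyz: "e = {x, y, z}"
    using three_graph_edgeE[OF assms(1,7)] .
  then have "eps_congruent (a, b, c) \<epsilon> (p x) (p y) (p z)"
    using assms(2,7) unfolding eps_realizes_def by blast
  then have "dist (p x) (p y) \<le> a + b + c" "dist (p y) (p z) \<le> a + b + c"
    "dist (p z) (p x) \<le> a + b + c"
    using assms(3-6) by (meson eps_congruent_dist_le eps_congruent_rotate)+
  then show ?thesis
    using assms(3-5,8,9) xyz by (auto simp: dist_commute)
qed

lemma dist_le_along_dense_order:
  fixes p :: "'v \<Rightarrow> 'a::metric_space" and M :: real
  assumes dense: "\<forall>i. 2 \<le> i \<and> i < length vs \<longrightarrow> (\<exists>e\<in>E. e \<subseteq> set (take (Suc i) vs) \<and> vs ! i \<in> e)"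
    and edges: "\<And>e. e \<in> E \<Longrightarrow> card e = 3"
    and edge_dist: "\<And>e u w. e \<in> E \<Longrightarrow> u \<in> e \<Longrightarrow> w \<in> e \<Longrightarrow> dist (p u) (p w) \<le> M"
    and "3 \<le> length vs" and "i < length vs"
  shows "dist (p (vs ! i)) (p (vs ! 0)) \<le> i * M"
  using \<open>i < length vs\<close>
proof (induction i rule: less_induct)
  case (less i)
  consider "i = 0" | "i = 1" | "2 \<le> i"
    by linarith
  then show ?case
  proof cases
    case 1
    then show ?thesis by simp
  next
    case 2
    obtain e where e: "e \<in> E" "e \<subseteq> set (take 3 vs)"
      using dense \<open>3 \<le> length vs\<close> by (auto simp: numeral_3_eq_3)
    have "card (set (take 3 vs)) \<le> card e"
      using card_length[of "take 3 vs"] edges[OF e(1)] by simp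
    then have "e = set (take 3 vs)"
      using e(2) by (simp add: card_seteq)
    moreover have "vs ! 0 \<in> set (take 3 vs)" "vs ! 1 \<in> set (take 3 vs)"
      using nth_mem[of 0 "take 3 vs"] nth_mem[of 1 "take 3 vs"] \<open>3 \<le> length vs\<close> by auto
    ultimately show ?thesis
      using edge_dist[OF e(1)] 2 by simp
  next
    case 3
    obtain e where e: "e \<in> E" "e \<subseteq> set (take (Suc i) vs)" "vs ! i \<in> e"
      using dense 3 less.prems by blast
    obtain u where u: "u \<in> e" "u \<noteq> vs ! i"
      using edges[OF e(1)] by (metis card_3_iff insertCI)
    have "u \<in> set (take (Suc i) vs)"
      using e(2) u(1) by blast
    then obtain j where "j < length (take (Suc i) vs)" "u = take (Suc i) vs ! j"
      by (metis in_set_conv_nth)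
    then have "j < Suc i" "u = vs ! j"
      by simp_all
    with u(2) have j: "j < i" "u = vs ! j"
      by (auto simp: less_Suc_eq)
    have "0 \<le> M"
      using edge_dist[OF e(1) u(1) u(1)] by simp
    then have "real j * M + M \<le> real i * M"
      using mult_right_mono[of "real j + 1" "real i" M] j(1) by (simp add: algebra_simps)
    moreover have "dist (p (vs ! j)) (p (vs ! 0)) \<le> j * M"
      using less.IH j(1) less.prems by simp
    moreover have "dist (p (vs ! i)) (p (vs ! j)) \<le> M"
      using edge_dist[OF e(1) e(3) u(1)] j(2) by simp
    ultimately show ?thesis
      using dist_triangle[of "p (vs ! i)" "p (vs ! 0)" "p (vs ! j)"] by linarith
  qed
qed

lemma dense3_dist_le:
  fixes p :: "'v \<Rightarrow> 'a::metric_space" and M :: real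
  assumes "three_graph V E" "dense3 V E" "E \<noteq> {}"
    and edge_dist: "\<And>e u w. e \<in> E \<Longrightarrow> u \<in> e \<Longrightarrow> w \<in> e \<Longrightarrow> dist (p u) (p w) \<le> M"
    and "u \<in> V" "w \<in> V"
  shows "dist (p u) (p w) \<le> 2 * card V * M"
proof -
  obtain vs where vs: "distinct vs" "set vs = V"
    "\<forall>i. 2 \<le> i \<and> i < length vs \<longrightarrow> (\<exists>e\<in>E. e \<subseteq> set (take (Suc i) vs) \<and> vs ! i \<in> e)"
    using assms(2) unfolding dense3_def by blast
  have edges: "\<And>e. e \<in> E \<Longrightarrow> card e = 3" and "finite V"
    using assms(1) by (auto simp: three_graph_def)
  obtain e where e: "e \<in> E"
    using assms(3) by blast
  then obtain v where v: "v \<in> e"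
    using edges by fastforce
  have "3 \<le> card V"
    using e edges assms(1) \<open>finite V\<close> by (metis card_mono three_graph_def)
  then have len: "length vs = card V" "3 \<le> length vs"
    using vs(1,2) distinct_card by fastforce+
  have "0 \<le> M"
    using edge_dist[OF e v v] by simp
  obtain i j where ij: "i < length vs" "u = vs ! i" "j < length vs" "w = vs ! j"
    using assms(5,6) vs(2) by (metis in_set_conv_nth)
  have along: "dist (p (vs ! k)) (p (vs ! 0)) \<le> k * M" if "k < length vs" for k
    by (rule dist_le_along_dense_order[OF vs(3)]) (use edges edge_dist len(2) that in blast)+
  have "dist (p u) (p w) \<le> real i * M + real j * M"
    using along[OF ij(1)] along[OF ij(3)] ij(2,4) dist_triangle[of "p u" "p w" "p (vs ! 0)"]
    by (simp add: dist_commute)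
  also have "\<dots> \<le> 2 * card V * M"
    using ij(1,3) len(1) \<open>0 \<le> M\<close> mult_right_mono[of "real i + real j" "2 * card V" M]
    by (simp add: algebra_simps)
  finally show ?thesis .
qed

lemma convergent_subseq_finite_family:
  fixes s :: "nat \<Rightarrow> 'v \<Rightarrow> 'a::heine_borel"
  assumes "finite V" and "\<And>v. v \<in> V \<Longrightarrow> bounded (range (\<lambda>n. s n v))"
  shows "\<exists>r l. strict_mono r \<and> (\<forall>v\<in>V. (\<lambda>n. s (r n) v) \<longlonglongrightarrow> l v)"
  using assms
proof (induction V rule: finite_induct)
  case empty
  have "strict_mono (\<lambda>n::nat. n)"
    by (simp add: strict_mono_def)
  then show ?case by blast
next
  case (insert w F)
  then obtain r l where r: "strict_mono r" "\<forall>v\<in>F. (\<lambda>n. s (r n) v) \<longlonglongrightarrow> l v"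
    by auto
  have "bounded (range (\<lambda>n. s (r n) w))"
    using insert.prems by (rule bounded_subset) auto
  then obtain lw r' where r': "strict_mono r'" "((\<lambda>n. s (r n) w) \<circ> r') \<longlonglongrightarrow> lw"
    using bounded_imp_convergent_subsequence by blast
  have "(\<lambda>n. s ((r \<circ> r') n) v) \<longlonglongrightarrow> (l(w := lw)) v" if "v \<in> insert w F" for v
  proof (cases "v = w")
    case True
    then show ?thesis using r'(2) by (simp add: o_def)
  next
    case False
    then have "((\<lambda>n. s (r n) v) \<circ> r') \<longlonglongrightarrow> l v"
      using that r(2) r'(1) LIMSEQ_subseq_LIMSEQ by blast
    then show ?thesis
      using False by (simp add: o_def)
  qed
  moreover have "strict_mono (r \<circ> r')"
    using r(1) r'(1) by (simp add: strict_mono_def)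
  ultimately show ?case
    by blast
qed

lemma realizes_if_eps_realizes_seq:
  assumes "three_graph V E" "dense3 V E" and "0 \<le> a" "0 \<le> b" "0 \<le> c"
    and "\<epsilon> \<longlonglongrightarrow> 0" "\<And>n. \<epsilon> n \<le> 1" "\<And>n. eps_realizes (a, b, c) (\<epsilon> n) E (f n)"
  shows "\<exists>l. realizes (a, b, c) E l"
proof (cases "E = {}")
  case True
  then show ?thesis by (simp add: realizes_def)
next
  case False
  then obtain x0 y0 z0 where "{x0, y0, z0} \<in> E"
    using three_graph_edgeE[OF assms(1)] by (metis ex_in_conv)
  then have "x0 \<in> V"
    using three_graph_edgeD[OF assms(1)] by blast
  define g where "g n v = f n v - f n x0" for n v
  \<comment> \<open>The realisations are bounded only up to translation, so pin \<open>x0\<close> at the origin.\<close>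
  have "bounded (range (\<lambda>n. g n v))" if "v \<in> V" for v
  proof -
    have "norm (g n v) \<le> 2 * card V * (a + b + c)" for n
      using dense3_dist_le[OF assms(1,2) False eps_realizes_dist_le[OF assms(1,8,3-5,7)] that \<open>x0 \<in> V\<close>]
      by (simp add: g_def dist_norm)
    then show ?thesis
      unfolding bounded_iff by blast
  qed
  then obtain r l where r: "strict_mono r" and l: "\<forall>v\<in>V. (\<lambda>n. g (r n) v) \<longlonglongrightarrow> l v"
    using convergent_subseq_finite_family[of V g] assms(1) by (auto simp: three_graph_def)
  have "realizes (a, b, c) E l"
    unfolding realizes_def
  proof (intro allI impI)
    fix x y z assume e: "{x, y, z} \<in> E"
    have "eps_congruent (a, b, c) (\<epsilon> (r n)) (g (r n) x) (g (r n) y) (g (r n) z)" for n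
      using assms(8)[of "r n"] e unfolding eps_realizes_def g_def by (blast intro: eps_congruent_translate)
    moreover have "(\<lambda>n. \<epsilon> (r n)) \<longlonglongrightarrow> 0"
      using LIMSEQ_subseq_LIMSEQ[OF assms(6) r] by (simp add: o_def)
    moreover have "(\<lambda>n. g (r n) x) \<longlonglongrightarrow> l x" "(\<lambda>n. g (r n) y) \<longlonglongrightarrow> l y"
      "(\<lambda>n. g (r n) z) \<longlonglongrightarrow> l z"
      using l three_graph_edgeD(2-4)[OF assms(1) e] by auto
    ultimately show "congruent_tri (a, b, c) (l x) (l y) (l z)"
      by (rule congruent_tri_limit)
  qed
  then show ?thesis
    by blast
qed

lemma realizes_if_eps_realizable:
  assumes "three_graph V E" "dense3 V E" and "0 \<le> a" "0 \<le> b" "0 \<le> c"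
    and "\<forall>\<epsilon>>0. \<exists>q. eps_realizes (a, b, c) \<epsilon> E q"
  shows "\<exists>l. realizes (a, b, c) E l"
proof -
  have "\<forall>n. \<exists>q. eps_realizes (a, b, c) (inverse (real (Suc n))) E q"
    using assms(6) by simp
  then obtain f where f: "\<And>n. eps_realizes (a, b, c) (inverse (real (Suc n))) E (f n)"
    by metis
  have "inverse (real (Suc n)) \<le> 1" for n
    by (simp add: inverse_le_1_iff)
  then show ?thesis
    using realizes_if_eps_realizes_seq[OF assms(1-5) LIMSEQ_inverse_real_of_nat _ f] by blast
qed

theorem lemma2p1:
  fixes V :: "'v set" and E :: "'v set set" and T :: "real \<times> real \<times> real"
  assumes "three_graph V E" and "dense3 V E" and "is_triangle T"
  shows "forbidden V E T \<longleftrightarrow> exactly_forbidden V E T"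
proof -
  obtain a b c where T: "T = (a, b, c)" by (cases T)
  have pos: "0 < a" "0 < b" "0 < c"
    using assms(3) by (auto simp: T is_triangle_def)
  then have nonneg: "0 \<le> a" "0 \<le> b" "0 \<le> c"
    by simp_all
  show ?thesis
    unfolding forbidden_iff[OF assms(1)] exactly_forbidden_iff[OF assms(1)] T
    using exists_inj_eps_realizes[OF assms(1) _ pos] realizes_if_eps_realizable[OF assms(1,2) nonneg]
    by blast
qed

end
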